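(* Let $n\ge1$ and let $A=\Lambda^*(\widetilde{M}_{\mathbb{C}})$ with the $\mathbb{Q}$-grading and $\mathbb{T}$-action described in the context. For every integer $d>2$, \[HH^2(A,A)^{2-d,\mathbb{T}}=\begin{cases}\mathbb{C}\cdot W & d=n+2,\\ 0 & \text{otherwise},\end{cases}\] where $W=z_1z_2\cdots z_{n+2}\in\mathrm{Sym}^{n+2}(\widetilde{M}_{\mathbb{C}}^\vee)$.
   Context: $\widetilde{M}=\mathbb{Z}\langle e_1,\dots,e_{n+2}\rangle$, $M=\widetilde{M}/\langle e_1+\dots+e_{n+2}\rangle$, $\widetilde{M}_{\mathbb{C}}=\widetilde{M}\otimes\mathbb{C}$, with dual basis $z_1,\dots,z_{n+2}$ of $\widetilde{M}_{\mathbb{C}}^\vee$. $A=\Lambda^*(\widetilde{M}_{\mathbb{C}})$ is graded so that $\Lambda^j$ sits in degree $\frac{n}{n+2}j$. The torus $\mathbb{T}=\mathrm{Hom}(M,\mathbb{C}^* )$ acts on $\widetilde{M}_{\mathbb{C}}$ by $\alpha\cdot e_j=\alpha(e_j)e_j$ and dually on $\widetilde{M}_{\mathbb{C}}^\vee$. $HH^{s+t}(A,A)^{t,\mathbb{T}}$ denotes the $\mathbb{T}$-equivariant Hochschild cohomology of $A$ with its bigrading ($s$ the number of inputs of a Hochschild cochain, $t$ the internal degree shift, so that a deformation by a higher product $\mu^d$ lies in $HH^2(A,A)^{2-d}$); by the Hochschild–Kostant–Rosenberg isomorphism, \[HH^{s+t}(A,A)^{t,\mathbb{T}}\cong\bigoplus_{\frac{2}{n+2}s+\frac{n}{n+2}j=s+t}\big(\mathrm{Sym}^s(\widetilde{M}_{\mathbb{C}}^\vee)\otimes\Lambda^j(\widetilde{M}_{\mathbb{C}})\big)^{\mathbb{T}}.\]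 *)

theory Defs
  imports Complex_Main
begin

(* Indices 0..n+1 stand for 1..n+2.  A basis vector of
   Sym^s(M~_C^dual) (x) Lambda^j(M~_C) is a pair (a, J): the monomial
   z^a = prod z_i^(a i) (a supported on {..<n+2}, total degree s) tensored
   with the wedge e_J of the basis vectors indexed by J (|J| = j). *)

definition hkr_basis :: "nat \<Rightarrow> nat \<Rightarrow> nat \<Rightarrow> ((nat \<Rightarrow> nat) \<times> nat set) set" where
  "hkr_basis n s j = {(a, J). (\<forall>i\<ge>n+2. a i = 0) \<and> J \<subseteq> {..<n+2}
      \<and> sum a {..<n+2} = s \<and> card J = j}"

(* The torus T = Hom(M, Cstar): characters alpha of M~ (alpha_i = alpha(e_i))
   which are trivial on e_1 + ... + e_{n+2}. *)
definition torus :: "nat \<Rightarrow> (nat \<Rightarrow> complex) set" where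
  "torus n = {\<alpha>. (\<forall>i<n+2. \<alpha> i \<noteq> 0) \<and> (\<Prod>i<n+2. \<alpha> i) = 1}"

(* alpha . e_j = alpha_j e_j, dually alpha . z_i = alpha_i^{-1} z_i,
   so alpha acts on z^a (x) e_J by this scalar. *)
definition weight :: "nat \<Rightarrow> (nat \<Rightarrow> complex) \<Rightarrow> (nat \<Rightarrow> nat) \<times> nat set \<Rightarrow> complex" where
  "weight n \<alpha> b = (\<Prod>i<n+2. inverse (\<alpha> i) ^ (fst b i)) * (\<Prod>i\<in>snd b. \<alpha> i)"

(* HH^{k}(A,A)^{t,T} (k = s+t the total degree, t the internal Q-degree),
   modelled through the HKR isomorphism of the context:
   the direct sum over j of (Sym^s(M~_C^dual) (x) Lambda^j(M~_C))^T where
   s = k - t and (2/(n+2)) s + (n/(n+2)) j = k. *)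
definition HH_T :: "nat \<Rightarrow> int \<Rightarrow> rat \<Rightarrow> ((nat \<Rightarrow> nat) \<times> nat set \<Rightarrow> complex) set" where
  "HH_T n k t = {c.
     (\<forall>b. c b \<noteq> 0 \<longrightarrow> (\<exists>s j. b \<in> hkr_basis n s j \<and> of_nat s = of_int k - t
         \<and> (2 * of_nat s + of_nat n * of_nat j) / (of_nat n + 2) = (of_int k :: rat)))
     \<and> (\<forall>\<alpha>\<in>torus n. \<forall>b. weight n \<alpha> b * c b = c b)}"

definition W :: "nat \<Rightarrow> (nat \<Rightarrow> nat) \<times> nat set \<Rightarrow> complex" where
  "W n b = (if b = ((\<lambda>i. if i < n+2 then 1 else 0), {}) then 1 else 0)"

end

theory Submission imports Defs begin

text \<open>The torus acts on the basis vector \<open>z\<^sup>a \<otimes> e\<^sub>J\<close> by the character \<open>\<alpha> \<mapsto> \<Prod>\<^sub>i \<alpha>\<^sub>i ^ (\<chi>\<^sub>J(i) - a\<^sub>i)\<close>,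
  and since \<open>\<T>\<close> consists of the \<open>\<alpha>\<close> with \<open>\<Prod>\<^sub>i \<alpha>\<^sub>i = 1\<close>, such a vector is invariant exactly when its
  exponent vector is a constant \<open>e\<close>. Summing the exponents gives \<open>j - s = (n + 2) e\<close>; together with
  the degree constraint \<open>2s + nj = 2(n + 2)\<close> this forces \<open>s = 2 - ne\<close>, and \<open>s = d > 2\<close> leaves only
  \<open>e = -1\<close>, i.e. \<open>j = 0\<close>, \<open>a = (1,\<dots>,1)\<close> and \<open>d = n + 2\<close>: the monomial \<open>W\<close>.\<close>

definition weight_exponent :: "(nat \<Rightarrow> nat) \<times> nat set \<Rightarrow> nat \<Rightarrow> int" where
  "weight_exponent b i = of_bool (i \<in> snd b) - int (fst b i)"

lemma weight_eq_prod_power_int: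
  assumes "snd b \<subseteq> {..<n+2}" and "\<forall>i<n+2. \<alpha> i \<noteq> 0"
  shows "weight n \<alpha> b = (\<Prod>i<n+2. \<alpha> i powi weight_exponent b i)"
proof -
  have "(\<Prod>i\<in>snd b. \<alpha> i) = (\<Prod>i<n+2. if i \<in> snd b then \<alpha> i else 1)"
    using prod.inter_restrict[of "{..<n+2}" \<alpha> "snd b"] assms(1) by (simp add: Int_absorb1)
  then have "weight n \<alpha> b = (\<Prod>i<n+2. inverse (\<alpha> i) ^ fst b i * (if i \<in> snd b then \<alpha> i else 1))"
    by (simp add: weight_def prod.distrib)
  also have "\<dots> = (\<Prod>i<n+2. \<alpha> i powi weight_exponent b i)"
  proof (intro prod.cong refl)
    fix i assume "i \<in> {..<n+2}"
    then have "\<alpha> i \<noteq> 0" using assms(2) by simp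
    then show "inverse (\<alpha> i) ^ fst b i * (if i \<in> snd b then \<alpha> i else 1) = \<alpha> i powi weight_exponent b i"
      by (simp add: weight_exponent_def power_int_diff power_int_minus power_inverse field_simps)
  qed
  finally show ?thesis .
qed

lemma power_int_two_eq_1_imp: "(2::complex) powi m = 1 \<Longrightarrow> m = 0"
proof -
  assume "(2::complex) powi m = 1"
  then have two: "(2::real) powi m = 2 powi 0"
    by (metis of_real_eq_1_iff of_real_numeral of_real_power_int power_int_0_right)
  show "m = 0"
  proof (rule linorder_cases[of m 0])
    assume "m < 0"
    then show ?thesis using power_int_strict_increasing[of m 0 "2::real"] two by simp
  next
    assume "m > 0"
    then show ?thesis using power_int_strict_increasing[of 0 m "2::real"] two by simp
  qed
qed

text \<open>Test invariance against the element of \<open>\<T>\<close> that is \<open>2\<close> at \<open>i\<close>, \<open>1/2\<close> at \<open>k\<close> and \<open>1\<close> elsewhere.\<close>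

lemma torus_invariant_weight_exponent_eq:
  assumes "snd b \<subseteq> {..<n+2}" and invariant: "\<forall>\<alpha>\<in>torus n. weight n \<alpha> b = 1"
    and "i < n+2" and "k < n+2" and "i \<noteq> k"
  shows "weight_exponent b i = weight_exponent b k"
proof -
  define \<alpha> :: "nat \<Rightarrow> complex" where "\<alpha> = (\<lambda>m. if m = i then 2 else if m = k then 1/2 else 1)"
  have nonzero: "\<forall>m<n+2. \<alpha> m \<noteq> 0" by (simp add: \<alpha>_def)
  have prod_ik: "(\<Prod>m<n+2. f m) = f i * f k" if "\<forall>m. m \<noteq> i \<and> m \<noteq> k \<longrightarrow> f m = 1"
    for f :: "nat \<Rightarrow> complex"
  proof -
    have "(\<Prod>m<n+2. f m) = (\<Prod>m\<in>{i,k}. f m)"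
      by (rule prod.mono_neutral_right) (use assms(3-5) that in auto)
    then show ?thesis using \<open>i \<noteq> k\<close> by simp
  qed
  have "(\<Prod>m<n+2. \<alpha> m) = 1" by (subst prod_ik) (use \<open>i \<noteq> k\<close> in \<open>auto simp: \<alpha>_def\<close>)
  then have "\<alpha> \<in> torus n" using nonzero by (simp add: torus_def)
  then have "1 = (\<Prod>m<n+2. \<alpha> m powi weight_exponent b m)"
    using invariant weight_eq_prod_power_int[OF assms(1) nonzero] by simp
  also have "\<dots> = 2 powi weight_exponent b i * (1/2) powi weight_exponent b k"
    by (subst prod_ik) (use \<open>i \<noteq> k\<close> in \<open>auto simp: \<alpha>_def\<close>)
  also have "\<dots> = 2 powi (weight_exponent b i - weight_exponent b k)"
    by (simp add: power_int_divide_distrib power_int_diff)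
  finally show ?thesis using power_int_two_eq_1_imp by fastforce
qed

lemma sum_weight_exponent:
  assumes "b \<in> hkr_basis n s j"
  shows "(\<Sum>i<n+2. weight_exponent b i) = int j - int s"
proof -
  obtain a J where b: "b = (a, J)" and J: "J \<subseteq> {..<n+2}" and "sum a {..<n+2} = s" "card J = j"
    using assms by (auto simp: hkr_basis_def)
  have "(\<Sum>i<n+2. of_bool (i \<in> J) :: int) = int (card J)"
    using sum.inter_restrict[of "{..<n+2}" "\<lambda>_. 1 :: int" J] J by (simp add: Int_absorb1 of_bool_def)
  moreover have "(\<Sum>i<n+2. int (a i)) = int s"
    using \<open>sum a {..<n+2} = s\<close> by (simp flip: of_nat_sum)
  ultimately show ?thesis
    using \<open>card J = j\<close> by (simp add: weight_exponent_def b sum_subtractf)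
qed

lemma HH_T_degree:
  assumes "c \<in> HH_T n 2 (of_int (2 - d))" and "c b \<noteq> 0"
  obtains s j where "b \<in> hkr_basis n s j" and "int s = d" and "2 * s + n * j = 2 * n + 4"
proof -
  obtain s j where b: "b \<in> hkr_basis n s j" and "rat_of_nat s = 2 - of_int (2 - d)"
    and degree: "(2 * of_nat s + of_nat n * of_nat j) / (of_nat n + 2) = (2 :: rat)"
    using assms unfolding HH_T_def by fastforce
  then have "rat_of_int (int s) = rat_of_int d" by simp
  then have "int s = d" by (simp only: of_int_eq_iff)
  have "rat_of_nat (2 * s + n * j) = rat_of_nat (2 * n + 4)"
    using degree by (simp add: field_simps)
  then have "2 * s + n * j = 2 * n + 4" by (simp only: of_nat_eq_iff)
  with b \<open>int s = d\<close> show thesis by (rule that)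
qed

lemma HH_T_weight_eq_1:
  assumes "c \<in> HH_T n k t" and "c b \<noteq> 0" and "\<alpha> \<in> torus n"
  shows "weight n \<alpha> b = 1"
proof -
  have "weight n \<alpha> b * c b = c b"
    using assms(1,3) unfolding HH_T_def by blast
  then show ?thesis using \<open>c b \<noteq> 0\<close> by simp
qed

lemma invariant_degree_constraints:
  fixes n s j :: nat and e :: int
  assumes "n \<ge> 1" and "int s > 2" and "2 * s + n * j = 2 * n + 4"
    and "int j - int s = int (n + 2) * e"
  shows "e = -1" and "j = 0" and "s = n + 2"
proof -
  have "2 * int s + int n * int j = 2 * int n + 4"
    using arg_cong[OF assms(3), of int] by simp
  then have "(int n + 2) * (int s + int n * e - 2) = 0"
    using assms(4) by (simp add: algebra_simps)
  then have s: "int s = 2 - int n * e" by simp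
  then have "e < 0" using assms(1,2) by (simp add: mult_less_0_iff)
  moreover have "int j = 2 + 2 * e" using assms(4) s by (simp add: algebra_simps)
  ultimately show "e = -1" by simp
  with \<open>int j = 2 + 2 * e\<close> s show "j = 0" and "s = n + 2" by simp_all
qed

definition W_index :: "nat \<Rightarrow> (nat \<Rightarrow> nat) \<times> nat set" where
  "W_index n = ((\<lambda>i. if i < n+2 then 1 else 0), {})"

lemma W_eq_indicator: "W n b = (if b = W_index n then 1 else 0)"
  by (simp add: W_def W_index_def)

lemma HH_T_support:
  assumes "n \<ge> 1" and "d > 2" and c: "c \<in> HH_T n 2 (of_int (2 - d))" and "c b \<noteq> 0"
  shows "d = int n + 2" and "b = W_index n"
proof -
  obtain s j where basis: "b \<in> hkr_basis n s j" and "int s = d" and degree: "2 * s + n * j = 2 * n + 4"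
    using HH_T_degree[OF c \<open>c b \<noteq> 0\<close>] .
  obtain a J where b: "b = (a, J)" and a_support: "\<forall>i\<ge>n+2. a i = 0" and J: "J \<subseteq> {..<n+2}"
    using basis by (auto simp: hkr_basis_def)
  define e where "e = weight_exponent b 0"
  have invariant: "\<forall>\<alpha>\<in>torus n. weight n \<alpha> b = 1"
    using HH_T_weight_eq_1[OF c \<open>c b \<noteq> 0\<close>] by blast
  have exponent_e: "weight_exponent b i = e" if "i < n+2" for i
    using torus_invariant_weight_exponent_eq[of b n i 0] that J b invariant
    by (cases "i = 0") (auto simp: e_def)
  then have exponent_sum: "int j - int s = int (n + 2) * e"
    using sum_weight_exponent[OF basis] by simp
  have "int s > 2" using \<open>int s = d\<close> \<open>d > 2\<close> by simp
  note constraints = invariant_degree_constraints[OF \<open>n \<ge> 1\<close> this degree exponent_sum]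
  show "d = int n + 2" using constraints \<open>int s = d\<close> by simp
  have "J = {}" using constraints basis b finite_subset[OF J] by (auto simp: hkr_basis_def)
  moreover have "a i = (if i < n+2 then 1 else 0)" for i
    using exponent_e[of i] constraints a_support \<open>J = {}\<close>
    by (cases "i < n+2") (auto simp: weight_exponent_def b)
  ultimately show "b = W_index n" by (auto simp: b W_index_def)
qed

lemma weight_W_index:
  assumes "\<alpha> \<in> torus n"
  shows "weight n \<alpha> (W_index n) = 1"
proof -
  have "weight n \<alpha> (W_index n) = (\<Prod>i<n+2. inverse (\<alpha> i))"
    by (simp add: weight_def W_index_def)
  also have "\<dots> = inverse (\<Prod>i<n+2. \<alpha> i)"
    using prod_inversef[of \<alpha> "{..<n+2}"] by (simp add: comp_def)
  also have "(\<Prod>i<n+2. \<alpha> i) = 1" using assms torus_def by blast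
  finally show ?thesis by simp
qed

lemma scaled_W_in_HH_T: "(\<lambda>b. x * W n b) \<in> HH_T n 2 (of_int (- int n))"
proof -
  have "W_index n \<in> hkr_basis n (n+2) 0" by (simp add: hkr_basis_def W_index_def)
  then have "\<exists>s j. W_index n \<in> hkr_basis n s j \<and> rat_of_nat s = of_int 2 - of_int (- int n)
      \<and> (2 * rat_of_nat s + rat_of_nat n * rat_of_nat j) / (rat_of_nat n + 2) = of_int 2"
    by (intro exI[of _ "n+2"] exI[of _ 0]) (simp add: field_simps)
  then show ?thesis
    unfolding HH_T_def by (auto simp: W_eq_indicator weight_W_index)
qed

lemma zero_in_HH_T: "(\<lambda>b. 0) \<in> HH_T n k t"
  by (simp add: HH_T_def)

theorem proposition5p32:
  fixes n :: nat and d :: int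
  assumes "n \<ge> 1" and "d > 2"
  shows "HH_T n 2 (of_int (2 - d)) =
           (if d = int n + 2 then {c. \<exists>x::complex. c = (\<lambda>b. x * W n b)} else {\<lambda>b. 0})"
proof -
  have multiple_of_W: "c = (\<lambda>b. c (W_index n) * W n b)" if "c \<in> HH_T n 2 (of_int (2 - d))" for c
    using HH_T_support(2)[OF assms that] by (force simp: W_eq_indicator)
  have zero: "c = (\<lambda>b. 0)" if "c \<in> HH_T n 2 (of_int (2 - d))" and "d \<noteq> int n + 2" for c
    using HH_T_support(1)[OF assms that(1)] that(2) by blast
  show ?thesis
  proof (cases "d = int n + 2")
    case True
    then show ?thesis using multiple_of_W scaled_W_in_HH_T[of _ n] by auto
  next
    case False
    then show ?thesis using zero zero_in_HH_T by auto
  qed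
qed

end
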